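(* Assume (RHS.1), (RHS.2), (BC.1), (BC.2), and, if (RHS.2b) holds, that condition (M.1) holds for all meshes. Then for any choice of parameters $\mathfrak h=(h,\varepsilon,\theta)$ there exists a unique $u_{\mathfrak h}\in\mathbb V_h$ solving the discrete problem.
   Context: Setting: $\Omega\subset\mathbb R^d$ ($d\ge1$) is a bounded domain with continuous boundary. For $r>0$, $\Omega^{(r)}=\{x\in\Omega:\operatorname{dist}(x,\partial\Omega)>r\}$. $\{\mathcal T_h\}_{h>0}$ is a family of meshes of closed simplices, $h=\max_T\operatorname{diam}T$, $\Omega_h$ the interior of the union of the simplices, with $\Omega^{(h)}\subset\Omega_h\subset\Omega$; $\mathcal N_h$ the set of vertices. $\mathbb V_h$: continuous piecewise linear functions on $\mathcal T_h$, hat basis $\{\hat\varphi_z\}$, Lagrange interpolant $\mathcal I_h$. Parameters $\mathfrak h=(h,\varepsilon,\theta)$, $\varepsilon\in[h,\operatorname{diam}\Omega]$, $0<\theta\le1$. $\mathcal N_h^I=\mathcal N_h\cap\Omega^{(2\varepsilon)}$, $\mathcal N_h^b=\mathcal N_h\setminus\mathcal N_h^I$. $\mathbb S_\theta$: finite symmetric subset of the unit sphere $\mathbb S$ such that each $v\in\mathbb S$ has $v_\theta\in\mathbb S_\theta$ with $|v-v_\theta|\le\theta$. For $z\in\mathcal N_h^I$: $\mathcal N_{\mathfrak h}(z)=\{z\}\cup\{z+\varepsilon v_\theta:v_\theta\in\mathbb S_\theta\}$, $-\Delta^\diamond_{\infty,\mathfrak h}w(z)=\varepsilon^{-2}\big(2w(z)-\max_{x\in\mathcal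 N_{\mathfrak h}(z)}\mathcal I_hw(x)-\min_{x\in\mathcal N_{\mathfrak h}(z)}\mathcal I_hw(x)\big)$, $\widetilde{\mathcal N}_{\mathfrak h}(z)=\{z\}\cup\{z'\in\mathcal N_h:\exists v_\theta\in\mathbb S_\theta,\ \hat\varphi_{z'}(z+\varepsilon v_\theta)>0\}$. Assumptions: (RHS.1) $f\in C(\Omega)\cap L^\infty(\Omega)$. (RHS.2) either (RHS.2a) $\sup_\Omega f<0$ or $\inf_\Omega f>0$, or (RHS.2b) $f\equiv0$. (BC.1) $g\in C(\partial\Omega)$. (BC.2) for every $\varepsilon>0$ a function $\tilde g_\varepsilon\in C(\overline\Omega)$ is given such that, if $g\in C^{0,\alpha}(\partial\Omega)$ for some $\alpha\in[0,1]$, then $\tilde g_\varepsilon\in C^{0,\alpha}(\overline\Omega)$ and $\|g-\tilde g_\varepsilon\|_{L^\infty(\partial\Omega)}\le C\varepsilon^\alpha$. (M.1) for every nonempty $S\subset\mathcal N_h^I$ there are $z\in S$, $z'\in\mathcal N_h\setminus S$ with $z'\in\widetilde{\mathcal N}_{\mathfrak h}(z)$. Discrete problem: find $u_{\mathfrak h}\in\mathbb V_h$ with $-\Delta^\diamond_{\infty,\mathfrak h}u_{\mathfrak h}(z)=f(z)$ for $z\in\mathcal N_h^I$ and $u_{\mathfrak h}(z)=\tilde g_\varepsilon(z)$ for $z\in\mathcal N_h^b$. *)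

theory Defs
  imports "HOL-Analysis.Analysis"
begin

definition continuous_boundary :: "'a::euclidean_space set \<Rightarrow> bool" where
  "continuous_boundary \<Omega> \<longleftrightarrow>
     (\<forall>x\<in>frontier \<Omega>. \<exists>r>0. \<exists>e \<gamma>. norm e = 1 \<and> continuous_on {y. y \<bullet> e = 0} \<gamma> \<and>
        \<Omega> \<inter> ball x r = {y \<in> ball x r. y \<bullet> e < \<gamma> (y - (y \<bullet> e) *\<^sub>R e)})"

definition bounded_domain_cb :: "'a::euclidean_space set \<Rightarrow> bool" where
  "bounded_domain_cb \<Omega> \<longleftrightarrow> open \<Omega> \<and> connected \<Omega> \<and> \<Omega> \<noteq> {} \<and> bounded \<Omega> \<and>
     continuous_boundary \<Omega>"

definition inner_set :: "'a::euclidean_space set \<Rightarrow> real \<Rightarrow> 'a set" where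
  "inner_set \<Omega> r = {x \<in> \<Omega>. infdist x (frontier \<Omega>) > r}"

definition vertices_of :: "'a::euclidean_space set \<Rightarrow> 'a set" where
  "vertices_of T = {v. v extreme_point_of T}"

definition mesh_nodes :: "'a::euclidean_space set set \<Rightarrow> 'a set" where
  "mesh_nodes \<T> = (\<Union>T\<in>\<T>. vertices_of T)"

definition is_mesh :: "'a::euclidean_space set \<Rightarrow> 'a set set \<Rightarrow> real \<Rightarrow> bool" where
  "is_mesh \<Omega> \<T> h \<longleftrightarrow> finite \<T> \<and> \<T> \<noteq> {} \<and>
     (\<forall>T\<in>\<T>. int DIM('a) simplex T) \<and>
     (\<forall>T\<in>\<T>. \<forall>T'\<in>\<T>. (T \<inter> T') face_of T) \<and>
     h = Max (diameter ` \<T>) \<and>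
     inner_set \<Omega> h \<subseteq> interior (\<Union>\<T>) \<and> interior (\<Union>\<T>) \<subseteq> \<Omega>"

text \<open>V_h: continuous piecewise linear functions on the mesh (extended by 0 outside
  the meshed region, so that elements are unique as HOL functions).\<close>
definition Vh :: "'a::euclidean_space set set \<Rightarrow> ('a \<Rightarrow> real) set" where
  "Vh \<T> = {u. continuous_on (\<Union>\<T>) u \<and>
             (\<forall>T\<in>\<T>. \<exists>a b. \<forall>x\<in>T. u x = a \<bullet> x + b) \<and>
             (\<forall>x. x \<notin> \<Union>\<T> \<longrightarrow> u x = 0)}"

definition hat :: "'a::euclidean_space set set \<Rightarrow> 'a \<Rightarrow> 'a \<Rightarrow> real" where
  "hat \<T> z = (THE u. u \<in> Vh \<T> \<and> (\<forall>z'\<in>mesh_nodes \<T>. u z' = (if z' = z then 1 else 0)))"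

definition interp :: "'a::euclidean_space set set \<Rightarrow> ('a \<Rightarrow> real) \<Rightarrow> 'a \<Rightarrow> real" where
  "interp \<T> w x = (\<Sum>z\<in>mesh_nodes \<T>. w z * hat \<T> z x)"

definition sphere_net :: "real \<Rightarrow> 'a::euclidean_space set \<Rightarrow> bool" where
  "sphere_net \<theta> S \<longleftrightarrow> finite S \<and> S \<subseteq> sphere 0 1 \<and> (\<forall>v\<in>S. - v \<in> S) \<and>
     (\<forall>v\<in>sphere 0 1. \<exists>v'\<in>S. norm (v - v') \<le> \<theta>)"

definition interior_nodes :: "'a::euclidean_space set \<Rightarrow> 'a set set \<Rightarrow> real \<Rightarrow> 'a set" where
  "interior_nodes \<Omega> \<T> \<epsilon> = mesh_nodes \<T> \<inter> inner_set \<Omega> (2 * \<epsilon>)"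

definition boundary_nodes :: "'a::euclidean_space set \<Rightarrow> 'a set set \<Rightarrow> real \<Rightarrow> 'a set" where
  "boundary_nodes \<Omega> \<T> \<epsilon> = mesh_nodes \<T> - interior_nodes \<Omega> \<T> \<epsilon>"

definition stencil :: "real \<Rightarrow> 'a::euclidean_space set \<Rightarrow> 'a \<Rightarrow> 'a set" where
  "stencil \<epsilon> S z = insert z ((\<lambda>v. z + \<epsilon> *\<^sub>R v) ` S)"

definition neg_inf_lap :: "'a::euclidean_space set set \<Rightarrow> real \<Rightarrow> 'a set \<Rightarrow> ('a \<Rightarrow> real) \<Rightarrow> 'a \<Rightarrow> real" where
  "neg_inf_lap \<T> \<epsilon> S w z =
     (2 * w z - Max (interp \<T> w ` stencil \<epsilon> S z) - Min (interp \<T> w ` stencil \<epsilon> S z)) / \<epsilon>\<^sup>2"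

definition ext_stencil :: "'a::euclidean_space set set \<Rightarrow> real \<Rightarrow> 'a set \<Rightarrow> 'a \<Rightarrow> 'a set" where
  "ext_stencil \<T> \<epsilon> S z =
     insert z {z' \<in> mesh_nodes \<T>. \<exists>v\<in>S. hat \<T> z' (z + \<epsilon> *\<^sub>R v) > 0}"

definition cond_M1 :: "'a::euclidean_space set \<Rightarrow> 'a set set \<Rightarrow> real \<Rightarrow> 'a set \<Rightarrow> bool" where
  "cond_M1 \<Omega> \<T> \<epsilon> S \<longleftrightarrow>
     (\<forall>A. A \<subseteq> interior_nodes \<Omega> \<T> \<epsilon> \<and> A \<noteq> {} \<longrightarrow>
        (\<exists>z\<in>A. \<exists>z'\<in>mesh_nodes \<T> - A. z' \<in> ext_stencil \<T> \<epsilon> S z))"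

definition solves_discrete :: "'a::euclidean_space set \<Rightarrow> 'a set set \<Rightarrow> real \<Rightarrow> 'a set \<Rightarrow>
    ('a \<Rightarrow> real) \<Rightarrow> ('a \<Rightarrow> real) \<Rightarrow> ('a \<Rightarrow> real) \<Rightarrow> bool" where
  "solves_discrete \<Omega> \<T> \<epsilon> S f gt u \<longleftrightarrow> u \<in> Vh \<T> \<and>
     (\<forall>z\<in>interior_nodes \<Omega> \<T> \<epsilon>. neg_inf_lap \<T> \<epsilon> S u z = f z) \<and>
     (\<forall>z\<in>boundary_nodes \<Omega> \<T> \<epsilon>. u z = gt z)"

definition holder_on :: "real \<Rightarrow> 'a::metric_space set \<Rightarrow> ('a \<Rightarrow> real) \<Rightarrow> bool" where
  "holder_on \<alpha> S u \<longleftrightarrow> continuous_on S u \<and> bounded (u ` S) \<and>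
     (\<exists>L. \<forall>x\<in>S. \<forall>y\<in>S. \<bar>u x - u y\<bar> \<le> L * dist x y powr \<alpha>)"

end

(*
  Existence is a Perron-type argument on nodal values. The update replacing a(z) by
  (max + min)/2 + eps^2 f(z)/2, with max and min of the P1 interpolant over the stencil of z, is
  monotone. For large K and C the concave quadratic K - C |x|^2 is a supersolution and its
  negative a subsolution: by Jensen the interpolant stays below the quadratic, and since the
  directions are symmetric unit vectors every stencil contains two points whose squared norms
  exceed 2 |z|^2 by eps^2, a gain of C eps^2 >= eps^2 |f(z)|. Tarski's argument between the two
  barriers gives a fixed point.

  Uniqueness is a comparison principle. If u - w attains a positive maximum M on the nodes, it
  does so only at interior nodes, and there the stencil max and min of u both exceed those of w
  by exactly M. Hence the maximiser of the interpolant of u (and the minimiser of that of w) over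
  the stencil is a convex combination of nodes where u - w = M. For f > 0 the node of this set
  where w is smallest violates the equation; f < 0 reduces to f > 0 via -w, -u; for f = 0 the
  nodes of this set where u is also maximal cannot be left through an extended stencil,
  contradicting (M.1).
*)

theory Submission
  imports Defs
begin

lemma affine_function_interpolates:
  fixes C :: "'a::euclidean_space set" and val :: "'a \<Rightarrow> real"
  assumes "\<not> affine_dependent C"
  shows "\<exists>a b. \<forall>x\<in>C. a \<bullet> x + b = val x"
proof (cases "C = {}")
  case True
  then show ?thesis by auto
next
  case False
  then obtain c where c: "c \<in> C" by auto
  let ?D = "(\<lambda>x. - c + x) ` (C - {c})"
  have "independent ?D"
    using affine_dependent_iff_dependent2[OF c] assms by simp
  then obtain l where l: "linear l" "\<forall>y\<in>?D. l y = val (y + c) - val c"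
    using linear_independent_extend[of ?D "\<lambda>y. val (y + c) - val c"] by blast
  define a where "a = adjoint l 1"
  have "a \<bullet> x + (val c - a \<bullet> c) = val x" if "x \<in> C" for x
  proof (cases "x = c")
    case False
    then have "l (- c + x) = val x - val c"
      using l(2) that by auto
    moreover have "l (- c + x) = a \<bullet> x - a \<bullet> c"
      using adjoint_works[OF l(1), of "- c + x" 1] by (simp add: a_def inner_commute inner_diff_left)
    ultimately show ?thesis by simp
  qed simp
  then show ?thesis by blast
qed

lemma affine_eq_on_convex_hull:
  fixes C :: "'a::real_inner set"
  assumes "\<forall>x\<in>C. a \<bullet> x + b = a' \<bullet> x + b'" "x \<in> convex hull C"
  shows "a \<bullet> x + b = a' \<bullet> x + b'"
proof -
  have "C \<subseteq> {x. (a - a') \<bullet> x = b' - b}"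
    using assms(1) by (auto simp: algebra_simps)
  then have "convex hull C \<subseteq> {x. (a - a') \<bullet> x = b' - b}"
    by (rule hull_minimal) (rule convex_hyperplane)
  then show ?thesis
    using assms(2) by (auto simp: algebra_simps)
qed

lemma affine_nonneg_on_convex_hull:
  fixes C :: "'a::real_inner set"
  assumes "\<forall>x\<in>C. 0 \<le> a \<bullet> x + b" "x \<in> convex hull C"
  shows "0 \<le> a \<bullet> x + b"
proof -
  have "C \<subseteq> {x. a \<bullet> x \<ge> - b}"
    using assms(1) by auto
  then have "convex hull C \<subseteq> {x. a \<bullet> x \<ge> - b}"
    by (rule hull_minimal) (rule convex_halfspace_ge)
  then show ?thesis
    using assms(2) by auto
qed

lemma convex_sum_le:
  fixes \<mu> c :: "'a \<Rightarrow> real"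
  assumes "finite N" "\<forall>y\<in>N. 0 \<le> \<mu> y" "sum \<mu> N = 1" "\<forall>y\<in>N. 0 < \<mu> y \<longrightarrow> c y \<le> m"
  shows "(\<Sum>y\<in>N. \<mu> y * c y) \<le> m"
proof -
  have "(\<Sum>y\<in>N. \<mu> y * c y) \<le> (\<Sum>y\<in>N. \<mu> y * m)"
  proof (rule sum_mono)
    fix y assume y: "y \<in> N"
    show "\<mu> y * c y \<le> \<mu> y * m"
    proof (cases "\<mu> y = 0")
      case False
      with assms(2,4) y have "0 \<le> \<mu> y" "c y \<le> m"
        by (auto simp: less_le)
      then show ?thesis
        by (rule mult_left_mono[rotated])
    qed simp
  qed
  also have "\<dots> = m"
    using assms(3) unfolding sum_distrib_right[symmetric] by simp
  finally show ?thesis .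
qed

lemma convex_sum_ge:
  fixes \<mu> c :: "'a \<Rightarrow> real"
  assumes "finite N" "\<forall>y\<in>N. 0 \<le> \<mu> y" "sum \<mu> N = 1" "\<forall>y\<in>N. 0 < \<mu> y \<longrightarrow> m \<le> c y"
  shows "m \<le> (\<Sum>y\<in>N. \<mu> y * c y)"
  using convex_sum_le[OF assms(1-3), of "\<lambda>y. - c y" "- m"] assms(4) by (simp add: sum_negf)

lemma convex_sum_eq_max_imp:
  fixes \<mu> c :: "'a \<Rightarrow> real"
  assumes "finite N" "\<forall>y\<in>N. 0 \<le> \<mu> y" "sum \<mu> N = 1" "\<forall>y\<in>N. 0 < \<mu> y \<longrightarrow> c y \<le> m"
    and "(\<Sum>y\<in>N. \<mu> y * c y) = m"
  shows "\<forall>y\<in>N. 0 < \<mu> y \<longrightarrow> c y = m"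
proof -
  have nonneg: "\<forall>y\<in>N. 0 \<le> \<mu> y * (m - c y)"
  proof
    fix y assume y: "y \<in> N"
    show "0 \<le> \<mu> y * (m - c y)"
    proof (cases "\<mu> y = 0")
      case False
      with assms(2,4) y have "0 \<le> \<mu> y" "c y \<le> m"
        by (auto simp: less_le)
      then show ?thesis
        by (simp add: mult_nonneg_nonneg)
    qed simp
  qed
  have "(\<Sum>y\<in>N. \<mu> y * (m - c y)) = sum \<mu> N * m - (\<Sum>y\<in>N. \<mu> y * c y)"
    unfolding right_diff_distrib sum_subtractf sum_distrib_right ..
  then have "(\<Sum>y\<in>N. \<mu> y * (m - c y)) = 0"
    using assms(3,5) by simp
  then have "\<forall>y\<in>N. \<mu> y * (m - c y) = 0"
    using sum_nonneg_eq_0_iff[OF assms(1), of "\<lambda>y. \<mu> y * (m - c y)"] nonneg by simp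
  then show ?thesis
    by auto
qed

lemma subconvex_sum_le:
  fixes \<mu> d :: "'a \<Rightarrow> real"
  assumes "finite N" "\<forall>y\<in>N. 0 \<le> \<mu> y" "sum \<mu> N \<le> 1" "0 \<le> M" "\<forall>y\<in>N. d y \<le> M"
  shows "(\<Sum>y\<in>N. \<mu> y * d y) \<le> M"
proof -
  have "(\<Sum>y\<in>N. \<mu> y * d y) \<le> (\<Sum>y\<in>N. \<mu> y * M)"
    using assms(2,5) by (intro sum_mono mult_left_mono) simp_all
  also have "\<dots> = sum \<mu> N * M"
    unfolding sum_distrib_right ..
  also have "\<dots> \<le> M"
    using mult_right_mono[OF assms(3,4)] by simp
  finally show ?thesis .
qed

lemma subconvex_sum_eq_max_imp:
  fixes \<mu> d :: "'a \<Rightarrow> real"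
  assumes "finite N" "\<forall>y\<in>N. 0 \<le> \<mu> y" "sum \<mu> N \<le> 1" "0 < M" "\<forall>y\<in>N. d y \<le> M"
    and "M \<le> (\<Sum>y\<in>N. \<mu> y * d y)"
  shows "sum \<mu> N = 1" "\<forall>y\<in>N. 0 < \<mu> y \<longrightarrow> d y = M"
proof -
  have "(\<Sum>y\<in>N. \<mu> y * d y) \<le> (\<Sum>y\<in>N. \<mu> y * M)"
    using assms(2,5) by (intro sum_mono mult_left_mono) simp_all
  also have "\<dots> = sum \<mu> N * M"
    unfolding sum_distrib_right ..
  finally have "1 * M \<le> sum \<mu> N * M"
    using assms(6) by linarith
  with assms(3,4) show sum1: "sum \<mu> N = 1"
    by (simp add: mult_le_cancel_right)
  have "(\<Sum>y\<in>N. \<mu> y * d y) = M"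
    using subconvex_sum_le[OF assms(1-3)] assms(4-6) by (simp add: order.antisym)
  then show "\<forall>y\<in>N. 0 < \<mu> y \<longrightarrow> d y = M"
    using convex_sum_eq_max_imp[OF assms(1,2) sum1] assms(5) by blast
qed

lemma monotone_fixpoint_between:
  fixes \<Phi> :: "('a \<Rightarrow> 'b::conditionally_complete_lattice) \<Rightarrow> 'a \<Rightarrow> 'b"
  assumes mono: "\<And>a b. \<forall>y\<in>N. a y \<le> b y \<Longrightarrow> \<forall>y\<in>N. \<Phi> a y \<le> \<Phi> b y"
    and lo_hi: "\<forall>y\<in>N. lo y \<le> hi y"
    and lo: "\<forall>y\<in>N. lo y \<le> \<Phi> lo y" and hi: "\<forall>y\<in>N. \<Phi> hi y \<le> hi y"
  shows "\<exists>a. \<forall>y\<in>N. \<Phi> a y = a y"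
proof -
  define X where "X = {a. \<forall>y\<in>N. lo y \<le> a y \<and> a y \<le> hi y}"
  define D where "D = {a\<in>X. \<forall>y\<in>N. a y \<le> \<Phi> a y}"
  define s where "s y = Sup ((\<lambda>a. a y) ` D)" for y
  have \<Phi>X: "\<Phi> a \<in> X" if "a \<in> X" for a
  proof -
    have "\<forall>y\<in>N. \<Phi> lo y \<le> \<Phi> a y" "\<forall>y\<in>N. \<Phi> a y \<le> \<Phi> hi y"
      using mono that unfolding X_def by auto
    then show ?thesis
      using lo hi unfolding X_def by (fastforce intro: order_trans)
  qed
  have loD: "lo \<in> D"
    using lo lo_hi unfolding D_def X_def by auto
  have bdd: "bdd_above ((\<lambda>a. a y) ` D)" if "y \<in> N" for y
    using that unfolding bdd_above_def D_def X_def by auto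
  have upper: "a y \<le> s y" if "a \<in> D" "y \<in> N" for a y
    unfolding s_def using that bdd by (intro cSup_upper) auto
  have least: "s y \<le> c" if "y \<in> N" "\<And>a. a \<in> D \<Longrightarrow> a y \<le> c" for y c
    unfolding s_def using that loD by (intro cSup_least) auto
  have sX: "s \<in> X"
    unfolding X_def using upper[OF loD] least D_def X_def by fastforce
  have s_post: "\<forall>y\<in>N. s y \<le> \<Phi> s y"
  proof
    fix y assume y: "y \<in> N"
    show "s y \<le> \<Phi> s y"
    proof (rule least[OF y])
      fix a assume a: "a \<in> D"
      have "\<forall>y\<in>N. \<Phi> a y \<le> \<Phi> s y"
        using mono upper a by auto
      then show "a y \<le> \<Phi> s y"
        using a y unfolding D_def by (fastforce intro: order_trans)
    qed
  qed
  have "\<Phi> s \<in> D"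
    using \<Phi>X[OF sX] mono[OF s_post] unfolding D_def by auto
  then have "\<forall>y\<in>N. \<Phi> s y \<le> s y"
    using upper by auto
  then show ?thesis
    using s_post by (intro exI[of _ s]) (fastforce intro: order.antisym)
qed

lemma finite_stencil: "finite S \<Longrightarrow> finite (stencil \<epsilon> S z)"
  unfolding stencil_def by simp

lemma center_in_stencil: "z \<in> stencil \<epsilon> S z"
  unfolding stencil_def by simp

lemma stencil_nonempty: "stencil \<epsilon> S z \<noteq> {}"
  unfolding stencil_def by simp

lemma shift_in_stencil: "v \<in> S \<Longrightarrow> z + \<epsilon> *\<^sub>R v \<in> stencil \<epsilon> S z"
  unfolding stencil_def by blast

lemma stencil_sq_norm_spread:
  fixes z :: "'a::euclidean_space"
  assumes "S \<subseteq> sphere 0 1" "\<And>v. v \<in> S \<Longrightarrow> - v \<in> S" "S \<noteq> {}" and p: "p \<in> stencil \<epsilon> S z"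
  shows "\<exists>p'\<in>stencil \<epsilon> S z. \<epsilon>\<^sup>2 \<le> p \<bullet> p + p' \<bullet> p' - 2 * (z \<bullet> z)"
proof -
  have sq: "(z + \<epsilon> *\<^sub>R v) \<bullet> (z + \<epsilon> *\<^sub>R v) = z \<bullet> z + 2 * (\<epsilon> * (z \<bullet> v)) + \<epsilon>\<^sup>2"
    if "v \<in> S" for v
  proof -
    have "v \<bullet> v = 1"
      using that assms(1) by (auto simp: norm_eq_1)
    then show ?thesis
      by (simp add: inner_add_left inner_add_right inner_commute power2_eq_square algebra_simps)
  qed
  show ?thesis
  proof (cases "p = z")
    case True
    obtain v where v: "v \<in> S" "0 \<le> \<epsilon> * (z \<bullet> v)"
    proof -
      obtain v where "v \<in> S" using assms(3) by auto
      then show thesis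
        using that[of v] that[of "- v"] assms(2) by (cases "0 \<le> \<epsilon> * (z \<bullet> v)") auto
    qed
    then show ?thesis
      using True sq[OF v(1)] shift_in_stencil[OF v(1)] by (intro bexI[of _ "z + \<epsilon> *\<^sub>R v"]) auto
  next
    case False
    then obtain v where v: "v \<in> S" "p = z + \<epsilon> *\<^sub>R v"
      using p unfolding stencil_def by auto
    have "- v \<in> S"
      using assms(2) v(1) by auto
    then show ?thesis
      using sq[OF v(1)] sq[OF \<open>- v \<in> S\<close>] v(2) shift_in_stencil[OF \<open>- v \<in> S\<close>]
      by (intro bexI[of _ "z + \<epsilon> *\<^sub>R - v"]) auto
  qed
qed

locale conforming_mesh =
  fixes \<T> :: "'a::euclidean_space set set"
  assumes finite_mesh: "finite \<T>"
    and cell_simplex: "\<And>T. T \<in> \<T> \<Longrightarrow> \<exists>n. n simplex T"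
    and cell_Int_face: "\<And>T T'. T \<in> \<T> \<Longrightarrow> T' \<in> \<T> \<Longrightarrow> (T \<inter> T') face_of T"
begin

abbreviation "N \<equiv> mesh_nodes \<T>"

lemma cell_vertices:
  assumes "T \<in> \<T>"
  shows "finite (vertices_of T)" "\<not> affine_dependent (vertices_of T)"
    "T = convex hull (vertices_of T)"
proof -
  obtain n where "n simplex T"
    using cell_simplex[OF assms] by blast
  then obtain C where C: "finite C" "\<not> affine_dependent C" "T = convex hull C"
    unfolding simplex by auto
  moreover have "vertices_of T = C"
    unfolding vertices_of_def C(3)
    using extreme_point_of_convex_hull_affine_independent[OF C(2)] by auto
  ultimately show "finite (vertices_of T)" "\<not> affine_dependent (vertices_of T)"
    "T = convex hull (vertices_of T)" by simp_all
qed

lemma compact_cell: "T \<in> \<T> \<Longrightarrow> compact T"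
  using finite_imp_compact_convex_hull[OF cell_vertices(1)] cell_vertices(3) by simp

lemma convex_cell: "T \<in> \<T> \<Longrightarrow> convex T"
  using convex_convex_hull[of "vertices_of T"] cell_vertices(3) by simp

lemma vertices_subset_cell: "vertices_of T \<subseteq> T"
  unfolding vertices_of_def by (auto simp: extreme_point_of_def)

lemma vertices_subset_nodes: "T \<in> \<T> \<Longrightarrow> vertices_of T \<subseteq> N"
  unfolding mesh_nodes_def by auto

lemma finite_nodes: "finite N"
  unfolding mesh_nodes_def using finite_mesh cell_vertices(1) by auto

lemma nodes_subset_mesh: "N \<subseteq> \<Union>\<T>"
  unfolding mesh_nodes_def using vertices_subset_cell by blast

lemma Vh_affine_on_cell:
  assumes "u \<in> Vh \<T>" "T \<in> \<T>"
  obtains a b where "\<forall>x\<in>T. u x = a \<bullet> x + b"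
  using assms unfolding Vh_def by blast

lemma Vh_outside: "u \<in> Vh \<T> \<Longrightarrow> x \<notin> \<Union>\<T> \<Longrightarrow> u x = 0"
  unfolding Vh_def by blast

lemma Vh_eqI:
  assumes "u \<in> Vh \<T>" "w \<in> Vh \<T>" "\<forall>y\<in>N. u y = w y"
  shows "u = w"
proof
  fix x
  show "u x = w x"
  proof (cases "x \<in> \<Union>\<T>")
    case True
    then obtain T where T: "T \<in> \<T>" "x \<in> T" by blast
    obtain a b where ab: "\<forall>x\<in>T. u x = a \<bullet> x + b"
      using Vh_affine_on_cell[OF assms(1) T(1)] .
    obtain a' b' where ab': "\<forall>x\<in>T. w x = a' \<bullet> x + b'"
      using Vh_affine_on_cell[OF assms(2) T(1)] .
    have "\<forall>y\<in>vertices_of T. a \<bullet> y + b = a' \<bullet> y + b'"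
    proof
      fix y assume "y \<in> vertices_of T"
      then have "y \<in> N" "y \<in> T"
        using vertices_subset_nodes[OF T(1)] vertices_subset_cell by blast+
      then show "a \<bullet> y + b = a' \<bullet> y + b'"
        using ab ab' assms(3) by metis
    qed
    then have "a \<bullet> x + b = a' \<bullet> x + b'"
      using affine_eq_on_convex_hull cell_vertices(3)[OF T(1)] T(2) by metis
    then show ?thesis
      using ab ab' T(2) by simp
  qed (simp add: Vh_outside assms)
qed

lemma Vh_nonneg:
  assumes "u \<in> Vh \<T>" "\<forall>y\<in>N. 0 \<le> u y"
  shows "0 \<le> u x"
proof (cases "x \<in> \<Union>\<T>")
  case True
  then obtain T where T: "T \<in> \<T>" "x \<in> T" by blast
  obtain a b where ab: "\<forall>x\<in>T. u x = a \<bullet> x + b"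
    using Vh_affine_on_cell[OF assms(1) T(1)] .
  have "\<forall>y\<in>vertices_of T. 0 \<le> a \<bullet> y + b"
  proof
    fix y assume "y \<in> vertices_of T"
    then have "y \<in> N" "y \<in> T"
      using vertices_subset_nodes[OF T(1)] vertices_subset_cell by blast+
    then show "0 \<le> a \<bullet> y + b"
      using ab assms(2) by metis
  qed
  then have "0 \<le> a \<bullet> x + b"
    using affine_nonneg_on_convex_hull cell_vertices(3)[OF T(1)] T(2) by metis
  then show ?thesis
    using ab T(2) by simp
qed (simp add: Vh_outside assms)

lemma affine_pieces_agree:
  assumes "T \<in> \<T>" "T' \<in> \<T>" "x \<in> T" "x \<in> T'"
    and "\<forall>v\<in>vertices_of T. a \<bullet> v + b = val v" "\<forall>v\<in>vertices_of T'. a' \<bullet> v + b' = val v"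
  shows "a \<bullet> x + b = a' \<bullet> x + b'"
proof -
  have face: "(T \<inter> T') face_of T" "(T \<inter> T') face_of T'"
    using cell_Int_face[OF assms(1,2)] cell_Int_face[OF assms(2,1)] by (simp_all add: Int_commute)
  have "compact (T \<inter> T')" "convex (T \<inter> T')"
    using assms(1,2) by (simp_all add: compact_Int compact_cell convex_Int convex_cell)
  then have hull: "T \<inter> T' = convex hull {v. v extreme_point_of (T \<inter> T')}"
    by (rule Krein_Milman_Minkowski)
  have "a \<bullet> v + b = a' \<bullet> v + b'" if "v extreme_point_of (T \<inter> T')" for v
  proof -
    have "v \<in> vertices_of T" "v \<in> vertices_of T'"
      using that extreme_point_of_face[OF face(1)] extreme_point_of_face[OF face(2)]
      by (auto simp: vertices_of_def)
    then show ?thesis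
      using assms(5,6) by simp
  qed
  then show ?thesis
    using affine_eq_on_convex_hull[of "{v. v extreme_point_of (T \<inter> T')}"] hull assms(3,4)
    by blast
qed

lemma Vh_cellwise_affineI:
  assumes "\<forall>T\<in>\<T>. \<forall>x\<in>T. u x = A T \<bullet> x + B T" "\<forall>x. x \<notin> \<Union>\<T> \<longrightarrow> u x = 0"
  shows "u \<in> Vh \<T>"
proof -
  have "continuous_on (\<Union>\<T>) u"
  proof (rule continuous_on_closed_Union[OF finite_mesh, of "\<lambda>T. T", simplified])
    fix T assume T: "T \<in> \<T>"
    show "closed T"
      using compact_cell[OF T] by (rule compact_imp_closed)
    have "continuous_on T (\<lambda>x. A T \<bullet> x + B T)"
      by (intro continuous_intros)
    then show "continuous_on T u"
      by (rule continuous_on_eq) (use assms(1) T in simp)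
  qed
  then show ?thesis
    unfolding Vh_def using assms by blast
qed

lemma Vh_nodal_extension:
  obtains u where "u \<in> Vh \<T>" "\<forall>y\<in>N. u y = val y"
proof -
  have "\<forall>T\<in>\<T>. \<exists>a b. \<forall>v\<in>vertices_of T. a \<bullet> v + b = val v"
    using affine_function_interpolates[OF cell_vertices(2)] by simp
  then obtain A B where AB: "\<forall>T\<in>\<T>. \<forall>v\<in>vertices_of T. A T \<bullet> v + B T = val v"
    by metis
  define cell where "cell x = (SOME T. T \<in> \<T> \<and> x \<in> T)" for x
  define u where "u x = (if x \<in> \<Union>\<T> then A (cell x) \<bullet> x + B (cell x) else 0)" for x
  have on_cell: "\<forall>T\<in>\<T>. \<forall>x\<in>T. u x = A T \<bullet> x + B T"
  proof (intro ballI)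
    fix T x assume T: "T \<in> \<T>" "x \<in> T"
    have c: "cell x \<in> \<T> \<and> x \<in> cell x"
      unfolding cell_def by (rule someI[of _ T]) (use T in blast)
    then have "A (cell x) \<bullet> x + B (cell x) = A T \<bullet> x + B T"
      using affine_pieces_agree[of "cell x" T x "A (cell x)" "B (cell x)" val "A T" "B T"] AB T by simp
    then show "u x = A T \<bullet> x + B T"
      unfolding u_def using T by auto
  qed
  moreover have "\<forall>x. x \<notin> \<Union>\<T> \<longrightarrow> u x = 0"
    by (simp add: u_def)
  ultimately have "u \<in> Vh \<T>"
    by (rule Vh_cellwise_affineI)
  moreover have "u y = val y" if "y \<in> N" for y
  proof -
    obtain T where T: "T \<in> \<T>" "y \<in> vertices_of T"
      using \<open>y \<in> N\<close> unfolding mesh_nodes_def by blast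
    then have "y \<in> T"
      using vertices_subset_cell by blast
    then show ?thesis
      using on_cell AB T by simp
  qed
  ultimately show thesis
    using that by blast
qed

lemma hat_Vh:
  assumes "z \<in> N"
  shows "hat \<T> z \<in> Vh \<T>" "\<And>y. y \<in> N \<Longrightarrow> hat \<T> z y = (if y = z then 1 else 0)"
proof -
  obtain u where u: "u \<in> Vh \<T>" "\<forall>y\<in>N. u y = (if y = z then 1 else 0)"
    using Vh_nodal_extension .
  have "\<exists>!u. u \<in> Vh \<T> \<and> (\<forall>y\<in>N. u y = (if y = z then 1 else 0))"
    using u Vh_eqI by (intro ex1I[of _ u]) auto
  then have "hat \<T> z \<in> Vh \<T> \<and> (\<forall>y\<in>N. hat \<T> z y = (if y = z then 1 else 0))"
    unfolding hat_def by (rule theI')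
  then show "hat \<T> z \<in> Vh \<T>" "\<And>y. y \<in> N \<Longrightarrow> hat \<T> z y = (if y = z then 1 else 0)"
    by auto
qed

lemma hat_nonneg:
  assumes "z \<in> N"
  shows "0 \<le> hat \<T> z x"
  using Vh_nonneg[OF hat_Vh(1)[OF assms]] hat_Vh(2)[OF assms] by simp

lemma Vh_lincomb:
  assumes "u \<in> Vh \<T>" "w \<in> Vh \<T>"
  shows "(\<lambda>x. c * u x + w x) \<in> Vh \<T>"
proof -
  have "continuous_on (\<Union>\<T>) (\<lambda>x. c * u x + w x)"
    using assms unfolding Vh_def by (intro continuous_intros) auto
  moreover have "\<exists>a b. \<forall>x\<in>T. c * u x + w x = a \<bullet> x + b" if T: "T \<in> \<T>" for T
  proof -
    obtain a b where ab: "\<forall>x\<in>T. u x = a \<bullet> x + b"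
      using Vh_affine_on_cell[OF assms(1) T] .
    obtain a' b' where ab': "\<forall>x\<in>T. w x = a' \<bullet> x + b'"
      using Vh_affine_on_cell[OF assms(2) T] .
    have "\<forall>x\<in>T. c * u x + w x = (c *\<^sub>R a + a') \<bullet> x + (c * b + b')"
      using ab ab' by (simp add: inner_add_left distrib_left)
    then show ?thesis
      by blast
  qed
  ultimately show ?thesis
    using assms unfolding Vh_def by simp
qed

lemma Vh_zero: "(\<lambda>x. 0) \<in> Vh \<T>"
  unfolding Vh_def by (auto intro: exI[of _ 0])

lemma Vh_sum:
  assumes "finite Z" "\<And>z. z \<in> Z \<Longrightarrow> F z \<in> Vh \<T>"
  shows "(\<lambda>x. \<Sum>z\<in>Z. c z * F z x) \<in> Vh \<T>"
  using assms
proof (induction Z rule: finite_induct)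
  case empty
  then show ?case
    using Vh_zero by simp
next
  case (insert z Z)
  then show ?case
    using Vh_lincomb[of "F z" "\<lambda>x. \<Sum>z\<in>Z. c z * F z x" "c z"] by simp
qed

lemma interp_eq_sum: "interp \<T> a p = (\<Sum>y\<in>N. hat \<T> y p * a y)"
  unfolding interp_def by (simp add: mult.commute)

lemma interp_Vh: "interp \<T> a \<in> Vh \<T>"
  using Vh_sum[OF finite_nodes, of "hat \<T>" a] hat_Vh(1)
  unfolding interp_def[abs_def] by simp

lemma interp_node:
  assumes "y \<in> N"
  shows "interp \<T> a y = a y"
proof -
  have "interp \<T> a y = (\<Sum>z\<in>N. if z = y then a z else 0)"
    unfolding interp_def by (rule sum.cong) (auto simp: hat_Vh(2)[OF _ assms])
  also have "\<dots> = a y"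
    using assms finite_nodes by simp
  finally show ?thesis .
qed

lemma interp_cong: "\<forall>y\<in>N. a y = b y \<Longrightarrow> interp \<T> a p = interp \<T> b p"
  unfolding interp_def by (rule sum.cong) simp_all

lemma interp_of_Vh: "u \<in> Vh \<T> \<Longrightarrow> interp \<T> u = u"
  by (rule Vh_eqI[OF interp_Vh]) (simp_all add: interp_node)

lemma interp_outside: "p \<notin> \<Union>\<T> \<Longrightarrow> interp \<T> a p = 0"
  using Vh_outside[OF interp_Vh] .

lemma interp_mono: "\<forall>y\<in>N. a y \<le> b y \<Longrightarrow> interp \<T> a p \<le> interp \<T> b p"
  unfolding interp_eq_sum by (intro sum_mono mult_left_mono hat_nonneg) simp_all

lemma interp_uminus: "interp \<T> (\<lambda>x. - a x) p = - interp \<T> a p"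
  unfolding interp_def by (simp add: sum_negf)

lemma interp_diff: "interp \<T> a p - interp \<T> b p = (\<Sum>y\<in>N. hat \<T> y p * (a y - b y))"
  unfolding interp_eq_sum by (simp add: right_diff_distrib sum_subtractf)

lemma sum_hat_affine:
  "(\<Sum>y\<in>N. hat \<T> y p * (e \<bullet> y + c)) = (if p \<in> \<Union>\<T> then e \<bullet> p + c else 0)"
proof -
  define u where "u x = (if x \<in> \<Union>\<T> then e \<bullet> x + c else 0)" for x
  have "u \<in> Vh \<T>"
    by (rule Vh_cellwise_affineI[of u "\<lambda>_. e" "\<lambda>_. c"]) (auto simp: u_def)
  then have "interp \<T> u p = u p"
    by (simp add: interp_of_Vh)
  moreover have "interp \<T> u p = (\<Sum>y\<in>N. hat \<T> y p * (e \<bullet> y + c))"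
    unfolding interp_eq_sum using nodes_subset_mesh by (intro sum.cong) (auto simp: u_def)
  ultimately show ?thesis
    by (simp add: u_def)
qed

lemma sum_hat: "(\<Sum>y\<in>N. hat \<T> y p) = (if p \<in> \<Union>\<T> then 1 else 0)"
  using sum_hat_affine[of p 0 1] by simp

lemma sum_hat_le_1: "(\<Sum>y\<in>N. hat \<T> y p) \<le> 1"
  by (simp add: sum_hat)

text \<open>Jensen's inequality for the squared norm: the hat functions reproduce affine functions.\<close>
lemma sq_norm_le_interp:
  assumes "p \<in> \<Union>\<T>"
  shows "p \<bullet> p \<le> (\<Sum>y\<in>N. hat \<T> y p * (y \<bullet> y))"
proof -
  have "0 \<le> (\<Sum>y\<in>N. hat \<T> y p * ((y - p) \<bullet> (y - p)))"
    by (intro sum_nonneg mult_nonneg_nonneg hat_nonneg) simp_all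
  also have "\<dots> = (\<Sum>y\<in>N. hat \<T> y p * (y \<bullet> y) + hat \<T> y p * ((- 2 *\<^sub>R p) \<bullet> y + p \<bullet> p))"
    by (intro sum.cong) (auto simp: inner_diff_left inner_diff_right inner_commute algebra_simps)
  also have "\<dots> = (\<Sum>y\<in>N. hat \<T> y p * (y \<bullet> y))
      + (\<Sum>y\<in>N. hat \<T> y p * ((- 2 *\<^sub>R p) \<bullet> y + p \<bullet> p))"
    by (simp only: sum.distrib)
  also have "\<dots> = (\<Sum>y\<in>N. hat \<T> y p * (y \<bullet> y)) - p \<bullet> p"
    using sum_hat_affine[of p "- 2 *\<^sub>R p" "p \<bullet> p"] assms by simp
  finally show ?thesis
    by simp
qed

lemma interp_concave_quadratic_le:
  assumes "0 \<le> C" "p \<notin> \<Union>\<T> \<Longrightarrow> C * (p \<bullet> p) \<le> K"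
  shows "interp \<T> (\<lambda>x. K - C * (x \<bullet> x)) p \<le> K - C * (p \<bullet> p)"
proof (cases "p \<in> \<Union>\<T>")
  case True
  have "interp \<T> (\<lambda>x. K - C * (x \<bullet> x)) p
      = K * (\<Sum>y\<in>N. hat \<T> y p) - C * (\<Sum>y\<in>N. hat \<T> y p * (y \<bullet> y))"
    unfolding interp_eq_sum
    by (simp add: right_diff_distrib sum_subtractf sum_distrib_left mult_ac)
  also have "\<dots> \<le> K - C * (p \<bullet> p)"
    using True sq_norm_le_interp[OF True] assms(1) by (simp add: sum_hat mult_left_mono)
  finally show ?thesis .
next
  case False
  then show ?thesis
    using assms(2) by (simp add: interp_outside)
qed

lemma interp_diff_le:
  assumes "\<forall>y\<in>N. a y - b y \<le> M" "0 \<le> M"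
  shows "interp \<T> a p - interp \<T> b p \<le> M"
proof -
  have "\<forall>y\<in>N. 0 \<le> hat \<T> y p"
    using hat_nonneg by blast
  then show ?thesis
    unfolding interp_diff by (rule subconvex_sum_le[OF finite_nodes _ sum_hat_le_1 assms(2,1)])
qed

lemma interp_diff_eq_max_imp:
  assumes "\<forall>y\<in>N. a y - b y \<le> M" "0 < M" "M \<le> interp \<T> a p - interp \<T> b p"
  shows "(\<Sum>y\<in>N. hat \<T> y p) = 1" "\<forall>y\<in>N. 0 < hat \<T> y p \<longrightarrow> a y - b y = M"
proof -
  have "\<forall>y\<in>N. 0 \<le> hat \<T> y p"
    using hat_nonneg by blast
  from subconvex_sum_eq_max_imp[OF finite_nodes this sum_hat_le_1 assms(2,1)] assms(3)
  show "(\<Sum>y\<in>N. hat \<T> y p) = 1" "\<forall>y\<in>N. 0 < hat \<T> y p \<longrightarrow> a y - b y = M"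
    unfolding interp_diff by blast+
qed

end

locale inf_laplace_scheme = conforming_mesh \<T> for \<T> :: "'a::euclidean_space set set" +
  fixes \<epsilon> :: real and S :: "'a set"
  assumes finite_dirs: "finite S" and unit_dirs: "S \<subseteq> sphere 0 1"
    and symmetric_dirs: "\<And>v. v \<in> S \<Longrightarrow> - v \<in> S" and nonempty_dirs: "S \<noteq> {}"
begin

definition stencil_max :: "('a \<Rightarrow> real) \<Rightarrow> 'a \<Rightarrow> real" where
  "stencil_max a z = Max (interp \<T> a ` stencil \<epsilon> S z)"

definition stencil_min :: "('a \<Rightarrow> real) \<Rightarrow> 'a \<Rightarrow> real" where
  "stencil_min a z = Min (interp \<T> a ` stencil \<epsilon> S z)"

definition scaled_inf_lap :: "('a \<Rightarrow> real) \<Rightarrow> 'a \<Rightarrow> real" where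
  "scaled_inf_lap a z = 2 * a z - stencil_max a z - stencil_min a z"

lemma neg_inf_lap_eq: "neg_inf_lap \<T> \<epsilon> S a z = scaled_inf_lap a z / \<epsilon>\<^sup>2"
  unfolding neg_inf_lap_def scaled_inf_lap_def stencil_max_def stencil_min_def ..

lemma finite_interp_stencil: "finite (interp \<T> a ` stencil \<epsilon> S z)"
  using finite_stencil[OF finite_dirs] by blast

lemma interp_le_stencil_max: "p \<in> stencil \<epsilon> S z \<Longrightarrow> interp \<T> a p \<le> stencil_max a z"
  unfolding stencil_max_def using finite_interp_stencil by simp

lemma stencil_min_le_interp: "p \<in> stencil \<epsilon> S z \<Longrightarrow> stencil_min a z \<le> interp \<T> a p"
  unfolding stencil_min_def using finite_interp_stencil by simp

lemma stencil_max_attained: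
  obtains p where "p \<in> stencil \<epsilon> S z" "interp \<T> a p = stencil_max a z"
proof -
  have "stencil_max a z \<in> interp \<T> a ` stencil \<epsilon> S z"
    unfolding stencil_max_def using finite_interp_stencil stencil_nonempty[of \<epsilon> S z] by (intro Max_in) auto
  then show thesis
    using that by auto
qed

lemma stencil_min_attained:
  obtains p where "p \<in> stencil \<epsilon> S z" "interp \<T> a p = stencil_min a z"
proof -
  have "stencil_min a z \<in> interp \<T> a ` stencil \<epsilon> S z"
    unfolding stencil_min_def using finite_interp_stencil stencil_nonempty[of \<epsilon> S z] by (intro Min_in) auto
  then show thesis
    using that by auto
qed

lemma node_le_stencil_max: "z \<in> N \<Longrightarrow> a z \<le> stencil_max a z"
  using interp_le_stencil_max[OF center_in_stencil] interp_node by metis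

lemma stencil_max_mono:
  assumes "\<forall>y\<in>N. a y \<le> b y"
  shows "stencil_max a z \<le> stencil_max b z"
proof -
  obtain p where "p \<in> stencil \<epsilon> S z" "interp \<T> a p = stencil_max a z"
    by (rule stencil_max_attained)
  then show ?thesis
    using interp_mono[OF assms, of p] interp_le_stencil_max[of p z b] by linarith
qed

lemma stencil_min_mono:
  assumes "\<forall>y\<in>N. a y \<le> b y"
  shows "stencil_min a z \<le> stencil_min b z"
proof -
  obtain p where "p \<in> stencil \<epsilon> S z" "interp \<T> b p = stencil_min b z"
    by (rule stencil_min_attained)
  then show ?thesis
    using interp_mono[OF assms, of p] stencil_min_le_interp[of p z a] by linarith
qed

lemma stencil_max_uminus: "stencil_max (\<lambda>x. - a x) z = - stencil_min a z"
proof -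
  have "interp \<T> (\<lambda>x. - a x) ` stencil \<epsilon> S z = uminus ` interp \<T> a ` stencil \<epsilon> S z"
    by (auto simp: interp_uminus)
  then show ?thesis
    unfolding stencil_max_def stencil_min_def
    using minus_Min_eq_Max[OF finite_interp_stencil] stencil_nonempty[of \<epsilon> S z] by simp
qed

lemma stencil_min_uminus: "stencil_min (\<lambda>x. - a x) z = - stencil_max a z"
proof -
  have "interp \<T> (\<lambda>x. - a x) ` stencil \<epsilon> S z = uminus ` interp \<T> a ` stencil \<epsilon> S z"
    by (auto simp: interp_uminus)
  then show ?thesis
    unfolding stencil_max_def stencil_min_def
    using minus_Max_eq_Min[OF finite_interp_stencil] stencil_nonempty[of \<epsilon> S z] by simp
qed

lemma scaled_inf_lap_uminus: "scaled_inf_lap (\<lambda>x. - a x) z = - scaled_inf_lap a z"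
  unfolding scaled_inf_lap_def stencil_max_uminus stencil_min_uminus by simp

definition nodal_update :: "'a set \<Rightarrow> ('a \<Rightarrow> real) \<Rightarrow> ('a \<Rightarrow> real) \<Rightarrow> ('a \<Rightarrow> real) \<Rightarrow> 'a \<Rightarrow> real"
  where "nodal_update I f g a z =
    (if z \<in> I then (stencil_max a z + stencil_min a z + \<epsilon>\<^sup>2 * f z) / 2 else g z)"

lemma nodal_update_mono:
  assumes "\<forall>y\<in>N. a y \<le> b y"
  shows "nodal_update I f g a z \<le> nodal_update I f g b z"
  unfolding nodal_update_def using stencil_max_mono[OF assms, of z] stencil_min_mono[OF assms, of z]
  by simp

lemma nodal_update_uminus:
  "nodal_update I f g (\<lambda>x. - a x) z = - nodal_update I (\<lambda>x. - f x) (\<lambda>x. - g x) a z"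
  unfolding nodal_update_def stencil_max_uminus stencil_min_uminus by (simp add: field_simps)

lemma nodal_fixpoint_solves:
  assumes "I \<subseteq> N" "\<forall>y\<in>N. nodal_update I f g a y = a y" "\<forall>y\<in>N. u y = a y"
  shows "\<forall>z\<in>I. scaled_inf_lap u z = \<epsilon>\<^sup>2 * f z" "\<forall>y\<in>N - I. u y = g y"
proof -
  have "stencil_max u z = stencil_max a z" "stencil_min u z = stencil_min a z" for z
    unfolding stencil_max_def stencil_min_def using interp_cong[OF assms(3)] by simp_all
  then have "nodal_update I f g u y = nodal_update I f g a y" for y
    unfolding nodal_update_def by simp
  then have "u y = nodal_update I f g u y" if "y \<in> N" for y
    using assms(2,3) that by simp
  then show "\<forall>z\<in>I. scaled_inf_lap u z = \<epsilon>\<^sup>2 * f z" "\<forall>y\<in>N - I. u y = g y"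
    using assms(1) unfolding scaled_inf_lap_def nodal_update_def by (auto simp: field_simps)
qed

lemma quadratic_supersolution:
  assumes "0 \<le> C" "z \<in> N" "\<forall>z\<in>I. f z \<le> C" "\<forall>y\<in>N - I. g y + C * (y \<bullet> y) \<le> K"
    and "\<forall>z\<in>I. \<forall>p\<in>stencil \<epsilon> S z. C * (p \<bullet> p) \<le> K"
  shows "nodal_update I f g (\<lambda>x. K - C * (x \<bullet> x)) z \<le> K - C * (z \<bullet> z)"
proof (cases "z \<in> I")
  case True
  let ?q = "\<lambda>x. K - C * (x \<bullet> x)"
  obtain p where p: "p \<in> stencil \<epsilon> S z" "interp \<T> ?q p = stencil_max ?q z"
    by (rule stencil_max_attained)
  obtain p' where p': "p' \<in> stencil \<epsilon> S z" "\<epsilon>\<^sup>2 \<le> p \<bullet> p + p' \<bullet> p' - 2 * (z \<bullet> z)"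
    using stencil_sq_norm_spread[OF unit_dirs symmetric_dirs nonempty_dirs p(1)] by blast
  have "interp \<T> ?q p \<le> ?q p" "interp \<T> ?q p' \<le> ?q p'"
    using assms(1,5) True p(1) p'(1) by (auto intro: interp_concave_quadratic_le)
  moreover have "stencil_min ?q z \<le> interp \<T> ?q p'"
    using p'(1) by (rule stencil_min_le_interp)
  moreover have "C * \<epsilon>\<^sup>2 \<le> C * (p \<bullet> p) + C * (p' \<bullet> p') - 2 * (C * (z \<bullet> z))"
    using mult_left_mono[OF p'(2) assms(1)] by (simp add: algebra_simps)
  moreover have "\<epsilon>\<^sup>2 * f z \<le> C * \<epsilon>\<^sup>2"
    using mult_left_mono[of "f z" C "\<epsilon>\<^sup>2"] assms(3) True by (simp add: mult.commute)
  ultimately show ?thesis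
    using True p(2) unfolding nodal_update_def by simp
next
  case False
  then have "g z + C * (z \<bullet> z) \<le> K"
    using assms(2,4) by blast
  then show ?thesis
    using False unfolding nodal_update_def by simp
qed

lemma quadratic_barrier:
  assumes "0 \<le> C" "\<forall>z\<in>I. \<bar>f z\<bar> \<le> C" "\<forall>y\<in>N. \<bar>g y\<bar> + C * (y \<bullet> y) \<le> K"
    and "\<forall>z\<in>I. \<forall>p\<in>stencil \<epsilon> S z. C * (p \<bullet> p) \<le> K" "y \<in> N"
  shows "nodal_update I f g (\<lambda>x. K - C * (x \<bullet> x)) y \<le> K - C * (y \<bullet> y)"
    and "- (K - C * (y \<bullet> y)) \<le> nodal_update I f g (\<lambda>x. - (K - C * (x \<bullet> x))) y"
    and "- (K - C * (y \<bullet> y)) \<le> K - C * (y \<bullet> y)"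
proof -
  have "\<bar>g y\<bar> + C * (y \<bullet> y) \<le> K" "0 \<le> C * (y \<bullet> y)"
    using assms(1,3,5) by simp_all
  then show "- (K - C * (y \<bullet> y)) \<le> K - C * (y \<bullet> y)"
    by linarith
  have "\<forall>z\<in>I. f z \<le> C" "\<forall>z\<in>I. - f z \<le> C"
    using assms(2) by auto
  moreover have "\<forall>y\<in>N - I. g y + C * (y \<bullet> y) \<le> K \<and> - g y + C * (y \<bullet> y) \<le> K"
  proof
    fix y assume "y \<in> N - I"
    then have "\<bar>g y\<bar> + C * (y \<bullet> y) \<le> K"
      using assms(3) by blast
    then show "g y + C * (y \<bullet> y) \<le> K \<and> - g y + C * (y \<bullet> y) \<le> K"
      by linarith
  qed
  ultimately have "nodal_update I f g (\<lambda>x. K - C * (x \<bullet> x)) y \<le> K - C * (y \<bullet> y)"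
    and "nodal_update I (\<lambda>x. - f x) (\<lambda>x. - g x) (\<lambda>x. K - C * (x \<bullet> x)) y \<le> K - C * (y \<bullet> y)"
    using quadratic_supersolution[OF assms(1,5) _ _ assms(4)] by simp_all
  then show "nodal_update I f g (\<lambda>x. K - C * (x \<bullet> x)) y \<le> K - C * (y \<bullet> y)"
    and "- (K - C * (y \<bullet> y)) \<le> nodal_update I f g (\<lambda>x. - (K - C * (x \<bullet> x))) y"
    using nodal_update_uminus[of I f g "\<lambda>x. K - C * (x \<bullet> x)" y] by linarith+
qed

lemma scaled_problem_solvable:
  assumes "I \<subseteq> N"
  obtains u where "u \<in> Vh \<T>" "\<forall>z\<in>I. scaled_inf_lap u z = \<epsilon>\<^sup>2 * f z" "\<forall>y\<in>N - I. u y = g y"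
proof -
  have "finite I"
    using assms finite_nodes finite_subset by blast
  define C where "C = (\<Sum>z\<in>I. \<bar>f z\<bar>)"
  have C: "0 \<le> C" "\<forall>z\<in>I. \<bar>f z\<bar> \<le> C"
    unfolding C_def using \<open>finite I\<close> by (auto intro: sum_nonneg member_le_sum)
  define X where "X = N \<union> (\<Union>z\<in>I. stencil \<epsilon> S z)"
  have "finite X"
    unfolding X_def using \<open>finite I\<close> finite_nodes finite_stencil[OF finite_dirs] by blast
  then have "bdd_above ((\<lambda>x. \<bar>g x\<bar> + C * (x \<bullet> x)) ` X)"
    by simp
  then obtain K where K: "\<forall>x\<in>X. \<bar>g x\<bar> + C * (x \<bullet> x) \<le> K"
    unfolding bdd_above_def by auto
  have K_nodes: "\<forall>y\<in>N. \<bar>g y\<bar> + C * (y \<bullet> y) \<le> K"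
    using K unfolding X_def by blast
  have K_stencils: "\<forall>z\<in>I. \<forall>p\<in>stencil \<epsilon> S z. C * (p \<bullet> p) \<le> K"
  proof (intro ballI)
    fix z p assume "z \<in> I" "p \<in> stencil \<epsilon> S z"
    then have "\<bar>g p\<bar> + C * (p \<bullet> p) \<le> K"
      using K unfolding X_def by blast
    then show "C * (p \<bullet> p) \<le> K"
      by linarith
  qed
  define q where "q x = K - C * (x \<bullet> x)" for x :: 'a
  note barrier = quadratic_barrier[OF C K_nodes K_stencils, folded q_def]
  have "\<exists>a. \<forall>y\<in>N. nodal_update I f g a y = a y"
    using monotone_fixpoint_between[of N "nodal_update I f g" "\<lambda>x. - q x" q]
      nodal_update_mono barrier by simp
  then obtain a where a: "\<forall>y\<in>N. nodal_update I f g a y = a y"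
    by blast
  obtain u where u: "u \<in> Vh \<T>" "\<forall>y\<in>N. u y = a y"
    by (rule Vh_nodal_extension)
  show thesis
    using that[OF u(1)] nodal_fixpoint_solves[OF assms a u(2)] by blast
qed

lemma stencil_extrema_shift:
  assumes "\<forall>y\<in>N. u y - w y \<le> M" "0 \<le> M" "z \<in> N" "u z - w z = M"
    and "scaled_inf_lap u z = scaled_inf_lap w z"
  shows "stencil_max u z = stencil_max w z + M" "stencil_min u z = stencil_min w z + M"
proof -
  have diff: "interp \<T> u p \<le> interp \<T> w p + M" for p
    using interp_diff_le[OF assms(1,2), of p] by simp
  obtain p where p: "p \<in> stencil \<epsilon> S z" "interp \<T> u p = stencil_max u z"
    by (rule stencil_max_attained)
  obtain q where q: "q \<in> stencil \<epsilon> S z" "interp \<T> w q = stencil_min w z"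
    by (rule stencil_min_attained)
  have "stencil_max u z \<le> stencil_max w z + M"
    using p diff[of p] interp_le_stencil_max[OF p(1), of w] by linarith
  moreover have "stencil_min u z \<le> stencil_min w z + M"
    using q diff[of q] stencil_min_le_interp[OF q(1), of u] by linarith
  moreover have "stencil_max u z + stencil_min u z = stencil_max w z + stencil_min w z + 2 * M"
    using assms(4,5) unfolding scaled_inf_lap_def by linarith
  ultimately show "stencil_max u z = stencil_max w z + M" "stencil_min u z = stencil_min w z + M"
    by linarith+
qed

lemma maximal_defect_at_stencil_max:
  assumes "\<forall>y\<in>N. u y - w y \<le> M" "0 < M" "z \<in> N" "u z - w z = M"
    and "scaled_inf_lap u z = scaled_inf_lap w z"
  obtains p where "p \<in> stencil \<epsilon> S z" "interp \<T> u p = stencil_max u z"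
    "(\<Sum>y\<in>N. hat \<T> y p) = 1" "\<forall>y\<in>N. 0 < hat \<T> y p \<longrightarrow> u y - w y = M"
proof -
  obtain p where p: "p \<in> stencil \<epsilon> S z" "interp \<T> u p = stencil_max u z"
    by (rule stencil_max_attained)
  have "M \<le> interp \<T> u p - interp \<T> w p"
    using p stencil_extrema_shift(1)[OF assms(1) less_imp_le[OF assms(2)] assms(3-5)]
      interp_le_stencil_max[OF p(1), of w] by linarith
  then show thesis
    using that[OF p] interp_diff_eq_max_imp[OF assms(1,2)] by blast
qed

lemma maximal_defect_at_stencil_min:
  assumes "\<forall>y\<in>N. u y - w y \<le> M" "0 < M" "z \<in> N" "u z - w z = M"
    and "scaled_inf_lap u z = scaled_inf_lap w z"
  obtains q where "q \<in> stencil \<epsilon> S z" "interp \<T> w q = stencil_min w z"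
    "(\<Sum>y\<in>N. hat \<T> y q) = 1" "\<forall>y\<in>N. 0 < hat \<T> y q \<longrightarrow> u y - w y = M"
proof -
  obtain q where q: "q \<in> stencil \<epsilon> S z" "interp \<T> w q = stencil_min w z"
    by (rule stencil_min_attained)
  have "M \<le> interp \<T> u q - interp \<T> w q"
    using q stencil_extrema_shift(2)[OF assms(1) less_imp_le[OF assms(2)] assms(3-5)]
      stencil_min_le_interp[OF q(1), of u] by linarith
  then show thesis
    using that[OF q] interp_diff_eq_max_imp[OF assms(1,2)] by blast
qed

lemma positive_lap_excludes_maximal_defect:
  assumes "\<forall>y\<in>N. u y - w y \<le> M" "0 < M"
    and A: "A = {y\<in>N. u y - w y = M}" "A \<noteq> {}"
    and lap: "\<forall>z\<in>A. scaled_inf_lap u z = scaled_inf_lap w z \<and> 0 < scaled_inf_lap w z"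
  shows False
proof -
  have "finite A"
    unfolding A(1) using finite_nodes by simp
  have "Min (w ` A) \<in> w ` A"
    using \<open>finite A\<close> A(2) by (intro Min_in) auto
  then obtain z where z: "z \<in> A" "w z = Min (w ` A)"
    by auto
  then have z_min: "\<forall>y\<in>A. w z \<le> w y"
    using \<open>finite A\<close> by simp
  have zN: "z \<in> N" "u z - w z = M"
    using z(1) A(1) by auto
  obtain q where q: "q \<in> stencil \<epsilon> S z" "interp \<T> w q = stencil_min w z"
    "(\<Sum>y\<in>N. hat \<T> y q) = 1" "\<forall>y\<in>N. 0 < hat \<T> y q \<longrightarrow> u y - w y = M"
    using maximal_defect_at_stencil_min[OF assms(1,2) zN] lap z(1) by blast
  have "\<forall>y\<in>N. 0 < hat \<T> y q \<longrightarrow> w z \<le> w y"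
    using q(4) z_min A(1) by blast
  then have "w z \<le> interp \<T> w q"
    unfolding interp_eq_sum using hat_nonneg by (intro convex_sum_ge[OF finite_nodes _ q(3)]) auto
  moreover have "w z \<le> stencil_max w z"
    using zN(1) by (rule node_le_stencil_max)
  ultimately have "scaled_inf_lap w z \<le> 0"
    using q(2) unfolding scaled_inf_lap_def by linarith
  then show False
    using lap z(1) by force
qed

lemma zero_lap_stencil_constant:
  assumes "\<forall>y\<in>N. u y - w y \<le> M" "0 < M"
    and A: "A = {y\<in>N. u y - w y = M}"
    and z: "z \<in> A" "\<forall>y\<in>A. u y \<le> u z"
    and lap: "scaled_inf_lap u z = 0" "scaled_inf_lap w z = 0"
    and p: "p \<in> stencil \<epsilon> S z"
  shows "interp \<T> u p = u z" "interp \<T> w p = u z - M"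
proof -
  have zN: "z \<in> N" "u z - w z = M"
    using z(1) A by auto
  have lap_eq: "scaled_inf_lap u z = scaled_inf_lap w z"
    using lap by simp
  obtain p' where p': "p' \<in> stencil \<epsilon> S z" "interp \<T> u p' = stencil_max u z"
    "(\<Sum>y\<in>N. hat \<T> y p') = 1" "\<forall>y\<in>N. 0 < hat \<T> y p' \<longrightarrow> u y - w y = M"
    using maximal_defect_at_stencil_max[OF assms(1,2) zN lap_eq] by blast
  have "\<forall>y\<in>N. 0 < hat \<T> y p' \<longrightarrow> u y \<le> u z"
    using p'(4) z(2) A by blast
  then have "interp \<T> u p' \<le> u z"
    unfolding interp_eq_sum using hat_nonneg by (intro convex_sum_le[OF finite_nodes _ p'(3)]) auto
  then have "stencil_max u z = u z"
    using p'(2) node_le_stencil_max[OF zN(1), of u] by linarith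
  moreover have "stencil_min u z = u z"
    using calculation lap(1) unfolding scaled_inf_lap_def by linarith
  moreover note stencil_extrema_shift[OF assms(1) less_imp_le[OF assms(2)] zN lap_eq]
  ultimately show "interp \<T> u p = u z" "interp \<T> w p = u z - M"
    using interp_le_stencil_max[OF p, of u] stencil_min_le_interp[OF p, of u]
      interp_le_stencil_max[OF p, of w] stencil_min_le_interp[OF p, of w] by linarith+
qed

lemma zero_lap_maximal_defect_closed:
  assumes "\<forall>y\<in>N. u y - w y \<le> M" "0 < M"
    and A: "A = {y\<in>N. u y - w y = M}"
    and z: "z \<in> A" "\<forall>y\<in>A. u y \<le> u z"
    and lap: "scaled_inf_lap u z = 0" "scaled_inf_lap w z = 0"
    and y: "y \<in> N" "y \<in> ext_stencil \<T> \<epsilon> S z"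
  shows "y \<in> A \<and> u y = u z"
proof (cases "y = z")
  case False
  then obtain v where v: "v \<in> S" "0 < hat \<T> y (z + \<epsilon> *\<^sub>R v)"
    using y(2) unfolding ext_stencil_def by blast
  let ?p = "z + \<epsilon> *\<^sub>R v"
  have "?p \<in> stencil \<epsilon> S z"
    using v(1) by (rule shift_in_stencil)
  note stencil_values = zero_lap_stencil_constant[OF assms(1,2) A z lap this]
  then have sum1: "(\<Sum>y\<in>N. hat \<T> y ?p) = 1"
    and support: "\<forall>y\<in>N. 0 < hat \<T> y ?p \<longrightarrow> u y - w y = M"
    using interp_diff_eq_max_imp[OF assms(1,2), of ?p] by simp_all
  have "\<forall>y\<in>N. 0 < hat \<T> y ?p \<longrightarrow> u y \<le> u z"
    using support z(2) A by blast
  moreover have "(\<Sum>y\<in>N. hat \<T> y ?p * u y) = u z"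
    using stencil_values(1) by (simp add: interp_eq_sum)
  moreover have "\<forall>y\<in>N. 0 \<le> hat \<T> y ?p"
    using hat_nonneg by blast
  ultimately have "\<forall>y\<in>N. 0 < hat \<T> y ?p \<longrightarrow> u y = u z"
    using convex_sum_eq_max_imp[OF finite_nodes _ sum1] by blast
  then show ?thesis
    using support v(2) y(1) A by blast
qed (use z(1) in simp)

definition stencil_connected_to_boundary :: "'a set \<Rightarrow> bool" where
  "stencil_connected_to_boundary I \<longleftrightarrow>
     (\<forall>A. A \<subseteq> I \<and> A \<noteq> {} \<longrightarrow> (\<exists>z\<in>A. \<exists>z'\<in>N - A. z' \<in> ext_stencil \<T> \<epsilon> S z))"

lemma zero_lap_excludes_maximal_defect:
  assumes "\<forall>y\<in>N. u y - w y \<le> M" "0 < M"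
    and A: "A = {y\<in>N. u y - w y = M}" "A \<noteq> {}" "A \<subseteq> I"
    and "stencil_connected_to_boundary I"
    and lap: "\<forall>z\<in>A. scaled_inf_lap u z = 0 \<and> scaled_inf_lap w z = 0"
  shows False
proof -
  have "finite A"
    unfolding A(1) using finite_nodes by simp
  define B where "B = {y\<in>A. u y = Max (u ` A)}"
  have "Max (u ` A) \<in> u ` A"
    using \<open>finite A\<close> A(2) by (intro Max_in) auto
  then have "B \<noteq> {}"
    unfolding B_def by auto
  moreover have "B \<subseteq> I"
    unfolding B_def using A(3) by auto
  ultimately obtain z y where zy: "z \<in> B" "y \<in> N - B" "y \<in> ext_stencil \<T> \<epsilon> S z"
    using assms(6) unfolding stencil_connected_to_boundary_def by blast
  have z: "z \<in> A" "\<forall>y\<in>A. u y \<le> u z"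
    using zy(1) \<open>finite A\<close> unfolding B_def by auto
  then have "y \<in> A \<and> u y = u z"
    using zero_lap_maximal_defect_closed[OF assms(1,2) A(1) z] lap zy(2,3) by blast
  then show False
    using zy(1,2) unfolding B_def by auto
qed

lemma comparison_principle:
  assumes "\<forall>y\<in>N - I. u y \<le> w y" "\<forall>z\<in>I. scaled_inf_lap u z = scaled_inf_lap w z"
    and "(\<forall>z\<in>I. 0 < scaled_inf_lap w z) \<or>
      (\<forall>z\<in>I. scaled_inf_lap w z = 0) \<and> stencil_connected_to_boundary I"
  shows "\<forall>y\<in>N. u y \<le> w y"
proof (rule ccontr)
  assume "\<not> (\<forall>y\<in>N. u y \<le> w y)"
  then obtain y0 where y0: "y0 \<in> N" "w y0 < u y0"
    by force
  define M where "M = Max ((\<lambda>y. u y - w y) ` N)"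
  define A where "A = {y\<in>N. u y - w y = M}"
  have M_ge: "\<forall>y\<in>N. u y - w y \<le> M"
    unfolding M_def using finite_nodes by simp
  then have "0 < M"
    using y0 by force
  have "M \<in> (\<lambda>y. u y - w y) ` N"
    unfolding M_def using finite_nodes y0(1) by (intro Max_in) auto
  then have "A \<noteq> {}"
    unfolding A_def by auto
  have "A \<subseteq> I"
    using assms(1) \<open>0 < M\<close> unfolding A_def by force
  from assms(3) show False
  proof
    assume "\<forall>z\<in>I. 0 < scaled_inf_lap w z"
    then show False
      using positive_lap_excludes_maximal_defect[OF M_ge \<open>0 < M\<close> A_def \<open>A \<noteq> {}\<close>]
        assms(2) \<open>A \<subseteq> I\<close> by blast
  next
    assume "(\<forall>z\<in>I. scaled_inf_lap w z = 0) \<and> stencil_connected_to_boundary I"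
    then show False
      using zero_lap_excludes_maximal_defect[OF M_ge \<open>0 < M\<close> A_def \<open>A \<noteq> {}\<close> \<open>A \<subseteq> I\<close>]
        assms(2) \<open>A \<subseteq> I\<close> by auto
  qed
qed

lemma solution_comparison:
  assumes "0 < \<epsilon>"
    and "(\<forall>z\<in>I. 0 < f z) \<or> (\<forall>z\<in>I. f z < 0) \<or>
      (\<forall>z\<in>I. f z = 0) \<and> stencil_connected_to_boundary I"
    and u: "\<forall>z\<in>I. scaled_inf_lap u z = \<epsilon>\<^sup>2 * f z" and w: "\<forall>z\<in>I. scaled_inf_lap w z = \<epsilon>\<^sup>2 * f z"
    and "\<forall>y\<in>N - I. u y = w y"
  shows "\<forall>y\<in>N. u y \<le> w y"
proof -
  have eq: "\<forall>z\<in>I. scaled_inf_lap u z = scaled_inf_lap w z"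
    using u w by simp
  have bdry: "\<forall>y\<in>N - I. u y \<le> w y"
    using assms(5) by simp
  consider "\<forall>z\<in>I. 0 < f z" | "\<forall>z\<in>I. f z < 0"
    | "(\<forall>z\<in>I. f z = 0) \<and> stencil_connected_to_boundary I"
    using assms(2) by blast
  then show ?thesis
  proof cases
    case 1
    then show ?thesis
      using comparison_principle[OF bdry eq] w assms(1) by simp
  next
    case 2
    then have "\<forall>z\<in>I. 0 < scaled_inf_lap (\<lambda>x. - u x) z"
      using u assms(1) by (simp add: scaled_inf_lap_uminus mult_pos_neg)
    then have "\<forall>y\<in>N. - w y \<le> - u y"
      using comparison_principle[of I "\<lambda>x. - w x" "\<lambda>x. - u x"] bdry eq
      by (simp add: scaled_inf_lap_uminus)
    then show ?thesis
      by simp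
  next
    case 3
    then show ?thesis
      using comparison_principle[OF bdry eq] w by simp
  qed
qed

lemma discrete_problem_unique_solution:
  assumes "0 < \<epsilon>" "I \<subseteq> N"
    and "(\<forall>z\<in>I. 0 < f z) \<or> (\<forall>z\<in>I. f z < 0) \<or>
      (\<forall>z\<in>I. f z = 0) \<and> stencil_connected_to_boundary I"
  shows "\<exists>!u. u \<in> Vh \<T> \<and> (\<forall>z\<in>I. neg_inf_lap \<T> \<epsilon> S u z = f z) \<and> (\<forall>y\<in>N - I. u y = g y)"
proof -
  have iff: "neg_inf_lap \<T> \<epsilon> S u z = f z \<longleftrightarrow> scaled_inf_lap u z = \<epsilon>\<^sup>2 * f z" for u z
    using assms(1) by (auto simp: neg_inf_lap_eq field_simps)
  obtain u where u: "u \<in> Vh \<T>" "\<forall>z\<in>I. scaled_inf_lap u z = \<epsilon>\<^sup>2 * f z" "\<forall>y\<in>N - I. u y = g y"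
    using scaled_problem_solvable[OF assms(2)] .
  moreover have "w = u"
    if w: "w \<in> Vh \<T>" "\<forall>z\<in>I. scaled_inf_lap w z = \<epsilon>\<^sup>2 * f z" "\<forall>y\<in>N - I. w y = g y" for w
  proof (rule Vh_eqI[OF w(1) u(1)])
    show "\<forall>y\<in>N. w y = u y"
      using solution_comparison[OF assms(1,3) w(2) u(2)] solution_comparison[OF assms(1,3) u(2) w(2)]
        u(3) w(3) by (simp add: order.antisym)
  qed
  ultimately show ?thesis
    unfolding iff by (intro ex1I[of _ u]) blast+
qed

end

lemma sphere_net_nonempty:
  assumes "sphere_net \<theta> (S :: 'a::euclidean_space set)"
  shows "S \<noteq> {}"
proof -
  obtain b :: 'a where "b \<in> Basis"
    using nonempty_Basis by blast
  then have "b \<in> sphere 0 1"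
    by simp
  then show ?thesis
    using assms unfolding sphere_net_def by blast
qed

lemma strict_sign_on_subset:
  fixes f :: "'a \<Rightarrow> real"
  assumes "(\<exists>c<0. \<forall>x\<in>\<Omega>. f x \<le> c) \<or> (\<exists>c>0. \<forall>x\<in>\<Omega>. f x \<ge> c) \<or> (\<forall>x\<in>\<Omega>. f x = 0)" "I \<subseteq> \<Omega>"
  shows "(\<forall>z\<in>I. 0 < f z) \<or> (\<forall>z\<in>I. f z < 0) \<or> (\<forall>x\<in>\<Omega>. f x = 0)"
  using assms(1)
proof (elim disjE exE conjE)
  fix c :: real assume "c < 0" "\<forall>x\<in>\<Omega>. f x \<le> c"
  then have "\<forall>z\<in>I. f z < 0"
    using assms(2) by fastforce
  then show ?thesis
    by blast
next
  fix c :: real assume "0 < c" "\<forall>x\<in>\<Omega>. c \<le> f x"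
  then have "\<forall>z\<in>I. 0 < f z"
    using assms(2) by fastforce
  then show ?thesis
    by blast
qed blast

lemma inf_laplace_scheme_if_mesh:
  assumes "is_mesh \<Omega> \<T> h" "sphere_net \<theta> S"
  shows "inf_laplace_scheme \<T> S"
proof (intro inf_laplace_scheme.intro conforming_mesh.intro inf_laplace_scheme_axioms.intro)
  show "finite \<T>" "\<And>T. T \<in> \<T> \<Longrightarrow> \<exists>n. n simplex T"
    "\<And>T T'. T \<in> \<T> \<Longrightarrow> T' \<in> \<T> \<Longrightarrow> T \<inter> T' face_of T"
    using assms(1) unfolding is_mesh_def by blast+
  show "finite S" "S \<subseteq> sphere 0 1" "\<And>v. v \<in> S \<Longrightarrow> - v \<in> S"
    using assms(2) unfolding sphere_net_def by blast+
  show "S \<noteq> {}"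
    using assms(2) by (rule sphere_net_nonempty)
qed

theorem lemma3p5:
  fixes \<Omega> :: "'a::euclidean_space set"
    and H :: "real set"
    and Tf :: "real \<Rightarrow> 'a set set"
    and Sf :: "real \<Rightarrow> 'a set"
    and f g :: "'a \<Rightarrow> real"
    and gt :: "real \<Rightarrow> 'a \<Rightarrow> real"
  assumes dom: "bounded_domain_cb \<Omega>"
    and meshes: "H \<subseteq> {0<..}" "\<forall>h\<in>H. is_mesh \<Omega> (Tf h) h"
    and nets: "\<forall>\<theta>\<in>{0<..1}. sphere_net \<theta> (Sf \<theta>)"
    and RHS1: "continuous_on \<Omega> f" "bounded (f ` \<Omega>)"
    and RHS2: "(\<exists>c<0. \<forall>x\<in>\<Omega>. f x \<le> c) \<or> (\<exists>c>0. \<forall>x\<in>\<Omega>. f x \<ge> c) \<or> (\<forall>x\<in>\<Omega>. f x = 0)"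
    and BC1: "continuous_on (frontier \<Omega>) g"
    and BC2a: "\<forall>\<epsilon>>0. continuous_on (closure \<Omega>) (gt \<epsilon>)"
    and BC2b: "\<forall>\<alpha>\<in>{0..1}. holder_on \<alpha> (frontier \<Omega>) g \<longrightarrow>
                 (\<exists>C. \<forall>\<epsilon>>0. holder_on \<alpha> (closure \<Omega>) (gt \<epsilon>) \<and>
                        (\<forall>x\<in>frontier \<Omega>. \<bar>g x - gt \<epsilon> x\<bar> \<le> C * \<epsilon> powr \<alpha>))"
    and M1: "(\<forall>x\<in>\<Omega>. f x = 0) \<longrightarrow>
               (\<forall>h\<in>H. \<forall>\<epsilon>\<in>{h..diameter \<Omega>}. \<forall>\<theta>\<in>{0<..1}. cond_M1 \<Omega> (Tf h) \<epsilon> (Sf \<theta>))"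
  shows "\<forall>h\<in>H. \<forall>\<epsilon>\<in>{h..diameter \<Omega>}. \<forall>\<theta>\<in>{0<..1}.
           \<exists>!u. solves_discrete \<Omega> (Tf h) \<epsilon> (Sf \<theta>) f (gt \<epsilon>) u"
proof (intro ballI)
  fix h \<epsilon> \<theta> assume h: "h \<in> H" and \<epsilon>: "\<epsilon> \<in> {h..diameter \<Omega>}" and \<theta>: "\<theta> \<in> {0<..1::real}"
  interpret inf_laplace_scheme "Tf h" \<epsilon> "Sf \<theta>"
    using meshes(2) nets h \<theta> by (blast intro: inf_laplace_scheme_if_mesh)
  let ?I = "interior_nodes \<Omega> (Tf h) \<epsilon>"
  have I: "?I \<subseteq> N" "?I \<subseteq> \<Omega>"
    unfolding interior_nodes_def inner_set_def by auto
  have "0 < \<epsilon>"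
    using h \<epsilon> meshes(1) by auto
  have "cond_M1 \<Omega> (Tf h) \<epsilon> (Sf \<theta>) \<longleftrightarrow> stencil_connected_to_boundary ?I"
    unfolding cond_M1_def stencil_connected_to_boundary_def ..
  then have "(\<forall>z\<in>?I. 0 < f z) \<or> (\<forall>z\<in>?I. f z < 0) \<or>
      (\<forall>z\<in>?I. f z = 0) \<and> stencil_connected_to_boundary ?I"
    using strict_sign_on_subset[OF RHS2 I(2)] M1 h \<epsilon> \<theta> I(2) by blast
  then show "\<exists>!u. solves_discrete \<Omega> (Tf h) \<epsilon> (Sf \<theta>) f (gt \<epsilon>) u"
    unfolding solves_discrete_def boundary_nodes_def
    by (rule discrete_problem_unique_solution[OF \<open>0 < \<epsilon>\<close> I(1)])
qed

end
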